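(* Let $R$ be a commutative local ring with maximal ideal $J$ and residue field $K=R/J$. Let $M$ be an $R$-module and $C$ an $R$-linear relation on $M$ such that $JM\subseteq (C^{-1})'+C'$ and such that $C^\sharp/C^\flat$ has finite dimension over $K$. Then there exists a free reduction $(X\mid\rho)$ of $(M,C)$ that meets in the radical.
   Context: An $R$-linear relation on $M$ is an $R$-submodule $C\subseteq M\oplus M$. For $m\in M$, $Cm=\{m'\in M:(m,m')\in C\}$; $C^{-1}=\{(y,x):(x,y)\in C\}$. Define submodules: $C''$ = set of $m\in M$ for which there is a sequence $(m_n)_{n\in\mathbb{N}}$ in $M$ with $m_0=m$ and $m_{n+1}\in Cm_n$ for all $n$; $C'$ = set of such $m$ for which such a sequence exists with additionally $m_n=0$ for $n\gg0$; $C^\sharp=C''\cap(C^{-1})''$; $C^\flat=C''\cap(C^{-1})'+(C^{-1})''\cap C'$. Then $C^\flat\subseteq C^\sharp$ and $C^\sharp/C^\flat$ is an $R$-module (annihilated by $J$ under the hypothesis, hence a $K$-vector space). A reduction of $(M,C)$ is a pair $(X\mid\rho)$ where $X$ is an $R[T,T^{-1}]$-module and $\rho\colon X\to M$ is $R$-linear with $C^\sharp=C^\flat+\mathrm{im}(\rho)$ and $\rho(Tx)\in C\rho(x)$ for all $x\in X$. It is free if $X$ is free as an $R$-module, and meets in the radical if $\{x\in X:\rho(x)\in C^\flat\}=\mathrm{rad}(X)$, the radical of $X$ as an $R$-module (intersection of maximal $R$-submodules). *)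

theory Defs
  imports Main "HOL-Library.Function_Algebras"
begin

text \<open>Commutative local ring: the non-units form an ideal (closed under addition);
  its maximal ideal J is the set of non-units.\<close>
definition local_ring :: "'r::comm_ring_1 itself \<Rightarrow> bool" where
  "local_ring _ \<longleftrightarrow> (\<forall>a b::'r. \<not> a dvd 1 \<and> \<not> b dvd 1 \<longrightarrow> \<not> (a + b) dvd 1)"

definition max_ideal :: "'r::comm_ring_1 set" where
  "max_ideal = {a. \<not> a dvd 1}"

definition is_module :: "('r::comm_ring_1 \<Rightarrow> 'b::ab_group_add \<Rightarrow> 'b) \<Rightarrow> bool" where
  "is_module s \<longleftrightarrow> (\<forall>a x y. s a (x + y) = s a x + s a y) \<and> (\<forall>a b x. s (a + b) x = s a x + s b x)
     \<and> (\<forall>a b x. s a (s b x) = s (a * b) x) \<and> (\<forall>x. s 1 x = x)"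

definition submod :: "('r \<Rightarrow> 'b \<Rightarrow> 'b) \<Rightarrow> 'b::ab_group_add set \<Rightarrow> bool" where
  "submod s S \<longleftrightarrow> 0 \<in> S \<and> (\<forall>x\<in>S. \<forall>y\<in>S. x + y \<in> S) \<and> (\<forall>c. \<forall>x\<in>S. s c x \<in> S)"

definition linear_relation :: "('r \<Rightarrow> 'm \<Rightarrow> 'm) \<Rightarrow> ('m::ab_group_add \<times> 'm) set \<Rightarrow> bool" where
  "linear_relation s C \<longleftrightarrow> (0, 0) \<in> C \<and>
     (\<forall>a b c d. (a, b) \<in> C \<and> (c, d) \<in> C \<longrightarrow> (a + c, b + d) \<in> C) \<and>
     (\<forall>r a b. (a, b) \<in> C \<longrightarrow> (s r a, s r b) \<in> C)"

definition rel_inv :: "('m \<times> 'm) set \<Rightarrow> ('m \<times> 'm) set" where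
  "rel_inv C = {(y, x). (x, y) \<in> C}"

definition rel_app :: "('m \<times> 'm) set \<Rightarrow> 'm \<Rightarrow> 'm set" where
  "rel_app C m = {m'. (m, m') \<in> C}"

definition dprime :: "('m \<times> 'm) set \<Rightarrow> 'm set" where
  "dprime C = {m. \<exists>f::nat \<Rightarrow> 'm. f 0 = m \<and> (\<forall>n. f (Suc n) \<in> rel_app C (f n))}"

definition sprime :: "('m::zero \<times> 'm) set \<Rightarrow> 'm set" where
  "sprime C = {m. \<exists>f::nat \<Rightarrow> 'm. f 0 = m \<and> (\<forall>n. f (Suc n) \<in> rel_app C (f n))
                    \<and> (\<exists>N. \<forall>n\<ge>N. f n = 0)}"

definition set_plus :: "'m::plus set \<Rightarrow> 'm set \<Rightarrow> 'm set" where
  "set_plus A B = {a + b | a b. a \<in> A \<and> b \<in> B}"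

definition sharp :: "('m \<times> 'm) set \<Rightarrow> 'm set" where
  "sharp C = dprime C \<inter> dprime (rel_inv C)"

definition flat :: "('m::{zero,plus} \<times> 'm) set \<Rightarrow> 'm set" where
  "flat C = set_plus (dprime C \<inter> sprime (rel_inv C)) (dprime (rel_inv C) \<inter> sprime C)"

definition rspan :: "('r::comm_ring_1 \<Rightarrow> 'b::ab_group_add \<Rightarrow> 'b) \<Rightarrow> 'b set \<Rightarrow> 'b set" where
  "rspan s B = {(\<Sum>a\<in>t. s (r a) a) | t r. finite t \<and> t \<subseteq> B}"

definition rdependent :: "('r::comm_ring_1 \<Rightarrow> 'b::ab_group_add \<Rightarrow> 'b) \<Rightarrow> 'b set \<Rightarrow> bool" where
  "rdependent s B \<longleftrightarrow> (\<exists>t u. finite t \<and> t \<subseteq> B \<and> (\<Sum>v\<in>t. s (u v) v) = 0 \<and> (\<exists>v\<in>t. u v \<noteq> 0))"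

definition JM :: "('r::comm_ring_1 \<Rightarrow> 'm::ab_group_add \<Rightarrow> 'm) \<Rightarrow> 'm set" where
  "JM s = rspan s {s r m | r m. r \<in> max_ideal}"

text \<open>C\<sharp>/C\<flat> is finite dimensional over K = R/J: finitely many cosets span it
  (the K-span of cosets coincides with their R-span since R acts through K).\<close>
definition fin_dim_quot :: "('r::comm_ring_1 \<Rightarrow> 'm::ab_group_add \<Rightarrow> 'm) \<Rightarrow> 'm set \<Rightarrow> 'm set \<Rightarrow> bool" where
  "fin_dim_quot s A B \<longleftrightarrow> (\<exists>S. finite S \<and> S \<subseteq> A \<and> A \<subseteq> set_plus B (rspan s S))"

definition fscale :: "'r::comm_ring_1 \<Rightarrow> (nat \<Rightarrow> 'r) \<Rightarrow> (nat \<Rightarrow> 'r)" where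
  "fscale c f = (\<lambda>n. c * f n)"

definition lin_on :: "('r \<Rightarrow> 'a \<Rightarrow> 'a) \<Rightarrow> ('r \<Rightarrow> 'b \<Rightarrow> 'b) \<Rightarrow> 'a::plus set \<Rightarrow> ('a \<Rightarrow> 'b::plus) \<Rightarrow> bool" where
  "lin_on s1 s2 X f \<longleftrightarrow> (\<forall>x\<in>X. \<forall>y\<in>X. f (x + y) = f x + f y) \<and> (\<forall>c. \<forall>x\<in>X. f (s1 c x) = s2 c (f x))"

text \<open>An R[T,T^{-1}]-module: an R-module X (here a submodule of nat \<Rightarrow> 'r) with an
  R-linear automorphism T (the action of T).\<close>
definition RT_module :: "(nat \<Rightarrow> 'r::comm_ring_1) set \<Rightarrow> ((nat \<Rightarrow> 'r) \<Rightarrow> (nat \<Rightarrow> 'r)) \<Rightarrow> bool" where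
  "RT_module X T \<longleftrightarrow> submod fscale X \<and> lin_on fscale fscale X T \<and> bij_betw T X X"

definition reduction ::
  "('r::comm_ring_1 \<Rightarrow> 'm::ab_group_add \<Rightarrow> 'm) \<Rightarrow> ('m \<times> 'm) set \<Rightarrow>
   (nat \<Rightarrow> 'r) set \<Rightarrow> ((nat \<Rightarrow> 'r) \<Rightarrow> (nat \<Rightarrow> 'r)) \<Rightarrow> ((nat \<Rightarrow> 'r) \<Rightarrow> 'm) \<Rightarrow> bool" where
  "reduction s C X T \<rho> \<longleftrightarrow> RT_module X T \<and> lin_on fscale s X \<rho>
     \<and> sharp C = set_plus (flat C) (\<rho> ` X)
     \<and> (\<forall>x\<in>X. \<rho> (T x) \<in> rel_app C (\<rho> x))"

definition free_mod :: "(nat \<Rightarrow> 'r::comm_ring_1) set \<Rightarrow> bool" where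
  "free_mod X \<longleftrightarrow> (\<exists>B\<subseteq>X. \<not> rdependent fscale B \<and> rspan fscale B = X)"

definition maximal_submod :: "(nat \<Rightarrow> 'r::comm_ring_1) set \<Rightarrow> (nat \<Rightarrow> 'r) set \<Rightarrow> bool" where
  "maximal_submod X N \<longleftrightarrow> submod fscale N \<and> N \<subseteq> X \<and> N \<noteq> X \<and>
     (\<forall>N'. submod fscale N' \<and> N \<subseteq> N' \<and> N' \<subseteq> X \<longrightarrow> N' = N \<or> N' = X)"

text \<open>Radical of X as R-module: intersection of maximal R-submodules (X if none).\<close>
definition rad :: "(nat \<Rightarrow> 'r::comm_ring_1) set \<Rightarrow> (nat \<Rightarrow> 'r) set" where
  "rad X = X \<inter> \<Inter>{N. maximal_submod X N}"

definition meets_in_radical ::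
  "('m::{zero,plus} \<times> 'm) set \<Rightarrow> (nat \<Rightarrow> 'r::comm_ring_1) set \<Rightarrow> ((nat \<Rightarrow> 'r) \<Rightarrow> 'm) \<Rightarrow> bool" where
  "meets_in_radical C X \<rho> \<longleftrightarrow> {x\<in>X. \<rho> x \<in> flat C} = rad X"

end

theory Submission
  imports Defs "Jordan_Normal_Form.Determinant"
begin

(* Choose a finite S in C^sharp of least cardinality with C^sharp = C^flat + span S and
   enumerate it as m_0, ..., m_(n-1). Since J C^sharp is contained in C^flat (this is where
   J M <= (C^-1)' + C' enters), minimality makes the m_i a K-basis of C^sharp/C^flat:
   sum c_i m_i lies in C^flat iff all c_i lie in J.
   Each m_i has a C-successor and a C-predecessor in C^sharp; expanding both modulo C^flat
   gives matrices D, E with E D = 1 mod J, so D is invertible over the local ring R.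
   Elements of C^flat can be pushed along C-chains that eventually vanish, which yields
   g_i in C^flat such that v_i = m_i + g_i satisfies (v_i, sum_j d_ij v_j) in C exactly.
   Then X = R^n, with T acting by right multiplication with D and rho(x) = sum x_i v_i, is a
   free reduction, and rho(x) lies in C^flat iff all x_i lie in J, i.e. iff x is in rad X. *)

section \<open>Local rings and matrices\<close>

definition basis_vec :: "nat \<Rightarrow> nat \<Rightarrow> 'r::zero_neq_one" where
  "basis_vec i = (\<lambda>j. if i = j then 1 else 0)"

definition inverts_on :: "nat \<Rightarrow> (nat \<Rightarrow> nat \<Rightarrow> 'r::comm_ring_1) \<Rightarrow> (nat \<Rightarrow> nat \<Rightarrow> 'r) \<Rightarrow> bool" where
  "inverts_on n a b \<longleftrightarrow> (\<forall>i<n. \<forall>j<n. (\<Sum>k<n. a i k * b k j) = basis_vec i j)"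

lemma zero_in_max_ideal [simp]: "0 \<in> max_ideal"
  unfolding max_ideal_def by simp

lemma one_not_in_max_ideal [simp]: "1 \<notin> max_ideal"
  unfolding max_ideal_def by simp

lemma unit_if_not_in_max_ideal: "a \<notin> max_ideal \<Longrightarrow> a dvd 1"
  unfolding max_ideal_def by simp

lemma max_ideal_mult_left: "a \<in> max_ideal \<Longrightarrow> r * a \<in> max_ideal"
  unfolding max_ideal_def using dvd_mult_right by blast

lemma max_ideal_mult_right: "a \<in> max_ideal \<Longrightarrow> a * r \<in> max_ideal"
  using max_ideal_mult_left[of a r] by (simp add: mult.commute)

lemma index_mult_mat_eq_sum:
  assumes "A \<in> carrier_mat n n" "B \<in> carrier_mat n n" "i < n" "j < n"
    and "\<And>k. k < n \<Longrightarrow> A $$ (i, k) = a k" "\<And>k. k < n \<Longrightarrow> B $$ (k, j) = b k"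
  shows "(A * B) $$ (i, j) = (\<Sum>k<n. a k * b k)"
proof -
  have "(A * B) $$ (i, j) = (\<Sum>k<n. A $$ (i, k) * B $$ (k, j))"
    using assms(1-4) by (auto simp: scalar_prod_def lessThan_atLeast0 intro: sum.cong)
  also have "\<dots> = (\<Sum>k<n. a k * b k)" using assms(5,6) by (intro sum.cong) auto
  finally show ?thesis .
qed

context
  assumes local: "local_ring TYPE('r::comm_ring_1)"
begin

lemma max_ideal_add: "(a::'r) \<in> max_ideal \<Longrightarrow> b \<in> max_ideal \<Longrightarrow> a + b \<in> max_ideal"
  using local unfolding max_ideal_def local_ring_def by blast

lemma max_ideal_sum: "(\<And>i. i \<in> I \<Longrightarrow> (f i::'r) \<in> max_ideal) \<Longrightarrow> sum f I \<in> max_ideal"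
  by (induction I rule: infinite_finite_induct) (auto simp: max_ideal_add)

lemma unit_one_minus_max_ideal: "(a::'r) \<in> max_ideal \<Longrightarrow> (1 - a) dvd 1"
  using max_ideal_add[of a "1 - a"] unfolding max_ideal_def by auto

lemma prod_diff_in_max_ideal:
  "(\<And>i. i \<in> I \<Longrightarrow> (a i::'r) - b i \<in> max_ideal) \<Longrightarrow> prod a I - prod b I \<in> max_ideal"
proof (induction I rule: infinite_finite_induct)
  case (insert x F)
  have "prod a (insert x F) - prod b (insert x F) = a x * (prod a F - prod b F) + (a x - b x) * prod b F"
    using insert.hyps by (simp add: algebra_simps)
  then show ?case
    using insert by (simp add: max_ideal_add max_ideal_mult_left max_ideal_mult_right)
qed simp_all

lemma det_diff_in_max_ideal:
  assumes A: "A \<in> carrier_mat n n" and B: "B \<in> carrier_mat n n"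
    and AB: "\<And>i j. i < n \<Longrightarrow> j < n \<Longrightarrow> (A $$ (i, j) :: 'r) - B $$ (i, j) \<in> max_ideal"
  shows "det A - det B \<in> max_ideal"
proof -
  have "det A - det B = (\<Sum>p | p permutes {0..<n}.
      signof p * ((\<Prod>i = 0..<n. A $$ (i, p i)) - (\<Prod>i = 0..<n. B $$ (i, p i))))"
    unfolding det_def'[OF A] det_def'[OF B] sum_subtractf[symmetric] by (simp add: algebra_simps)
  also have "\<dots> \<in> max_ideal"
  proof (intro max_ideal_sum max_ideal_mult_left prod_diff_in_max_ideal AB)
    fix p i assume "p \<in> {p. p permutes {0..<n}}" "i \<in> {0..<n}"
    then show "i < n" "p i < n" using permutes_in_image by fastforce+
  qed
  finally show ?thesis .
qed

text \<open>The determinant of \<open>D\<close> is a unit modulo \<open>J\<close>, hence a unit, and the scaled adjugate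
  inverts \<open>D\<close>.\<close>
lemma exists_inverse_if_left_inverse_mod_max_ideal:
  fixes d e :: "nat \<Rightarrow> nat \<Rightarrow> 'r"
  assumes ED: "\<And>i j. i < n \<Longrightarrow> j < n \<Longrightarrow> basis_vec i j - (\<Sum>k<n. e i k * d k j) \<in> max_ideal"
  obtains d' where "inverts_on n d d'" "inverts_on n d' d"
proof -
  define D where "D = mat n n (\<lambda>(i, j). d i j)"
  define E where "E = mat n n (\<lambda>(i, j). e i j)"
  have D: "D \<in> carrier_mat n n" and E: "E \<in> carrier_mat n n" unfolding D_def E_def by auto
  have ED_entry: "(E * D) $$ (i, j) = (\<Sum>k<n. e i k * d k j)" if "i < n" "j < n" for i j
    by (rule index_mult_mat_eq_sum) (use D E that in \<open>auto simp: D_def E_def\<close>)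
  have "det (1\<^sub>m n) - det (E * D) \<in> max_ideal"
  proof (rule det_diff_in_max_ideal)
    fix i j assume "i < n" "j < n"
    then show "1\<^sub>m n $$ (i, j) - (E * D) $$ (i, j) \<in> max_ideal"
      using ED[of i j] by (subst ED_entry) (auto simp: basis_vec_def)
  qed (use D E in auto)
  then have "(det E * det D) dvd 1"
    using unit_one_minus_max_ideal det_mult[OF E D] by fastforce
  then obtain u where u: "u * det D = 1" by (metis dvdE dvd_mult_right mult.commute)
  define d' where "d' i j = u * adj_mat D $$ (i, j)" for i j
  have adj: "adj_mat D \<in> carrier_mat n n" "D * adj_mat D = det D \<cdot>\<^sub>m 1\<^sub>m n" "adj_mat D * D = det D \<cdot>\<^sub>m 1\<^sub>m n"
    using adj_mat[OF D] by auto
  have "(\<Sum>k<n. d i k * d' k j) = basis_vec i j" if "i < n" "j < n" for i j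
  proof -
    have "(\<Sum>k<n. d i k * adj_mat D $$ (k, j)) = (D * adj_mat D) $$ (i, j)"
      by (rule index_mult_mat_eq_sum[symmetric]) (use D adj(1) that in \<open>auto simp: D_def\<close>)
    also have "\<dots> = det D * basis_vec i j"
      using that unfolding adj(2) by (simp add: basis_vec_def)
    finally have "u * (\<Sum>k<n. d i k * adj_mat D $$ (k, j)) = basis_vec i j"
      using u by (simp add: mult.assoc[symmetric])
    then show ?thesis unfolding d'_def sum_distrib_left by (simp add: ac_simps)
  qed
  moreover have "(\<Sum>k<n. d' i k * d k j) = basis_vec i j" if "i < n" "j < n" for i j
  proof -
    have "(\<Sum>k<n. adj_mat D $$ (i, k) * d k j) = (adj_mat D * D) $$ (i, j)"
      by (rule index_mult_mat_eq_sum[symmetric]) (use D adj(1) that in \<open>auto simp: D_def\<close>)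
    also have "\<dots> = det D * basis_vec i j"
      using that unfolding adj(3) by (simp add: basis_vec_def)
    finally have "u * (\<Sum>k<n. adj_mat D $$ (i, k) * d k j) = basis_vec i j"
      using u by (simp add: mult.assoc[symmetric])
    then show ?thesis unfolding d'_def sum_distrib_left by (simp add: ac_simps)
  qed
  ultimately show thesis using that unfolding inverts_on_def by blast
qed

end

section \<open>Chains of a relation\<close>

lemma rel_inv_iff [simp]: "(a, b) \<in> rel_inv P \<longleftrightarrow> (b, a) \<in> P"
  unfolding rel_inv_def by auto

lemma rel_inv_rel_inv [simp]: "rel_inv (rel_inv P) = P"
  unfolding rel_inv_def by auto

lemma dprime_next:
  assumes "m \<in> dprime P"
  shows "\<exists>m'. (m, m') \<in> P \<and> m' \<in> dprime P"
proof -
  obtain f where f: "f 0 = m" "\<And>n. (f n, f (Suc n)) \<in> P"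
    using assms unfolding dprime_def rel_app_def by auto
  have "f 1 \<in> dprime P" unfolding dprime_def rel_app_def
    by (intro CollectI exI[of _ "\<lambda>n. f (Suc n)"]) (use f in auto)
  then show ?thesis using f by force
qed

lemma dprime_if_next:
  assumes "(m, m') \<in> P" "m' \<in> dprime P"
  shows "m \<in> dprime P"
proof -
  obtain f where "f 0 = m'" "\<And>n. (f n, f (Suc n)) \<in> P"
    using assms(2) unfolding dprime_def rel_app_def by auto
  then show ?thesis unfolding dprime_def rel_app_def
    by (intro CollectI exI[of _ "\<lambda>n. case n of 0 \<Rightarrow> m | Suc k \<Rightarrow> f k"])
      (use assms(1) in \<open>auto split: nat.split\<close>)
qed

lemma sprime_next:
  assumes "m \<in> sprime P"
  shows "\<exists>m'. (m, m') \<in> P \<and> m' \<in> sprime P"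
proof -
  obtain f N where f: "f 0 = m" "\<And>n. (f n, f (Suc n)) \<in> P" "\<And>n. n \<ge> N \<Longrightarrow> f n = 0"
    using assms unfolding sprime_def rel_app_def by auto
  have "f 1 \<in> sprime P" unfolding sprime_def rel_app_def
    by (intro CollectI exI[of _ "\<lambda>n. f (Suc n)"] conjI exI[of _ N]) (use f in auto)
  then show ?thesis using f by force
qed

lemma sprime_if_next:
  assumes "(m, m') \<in> P" "m' \<in> sprime P"
  shows "m \<in> sprime P"
proof -
  obtain f N where f: "f 0 = m'" "\<And>n. (f n, f (Suc n)) \<in> P" "\<And>n. n \<ge> N \<Longrightarrow> f n = 0"
    using assms(2) unfolding sprime_def rel_app_def by auto
  show ?thesis unfolding sprime_def rel_app_def
    by (intro CollectI exI[of _ "\<lambda>n. case n of 0 \<Rightarrow> m | Suc k \<Rightarrow> f k"] conjI exI[of _ "Suc N"])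
      (use f assms(1) in \<open>auto split: nat.split\<close>)
qed

lemma sprime_subset_dprime: "sprime P \<subseteq> dprime P"
  unfolding sprime_def dprime_def by blast

lemma sprime_chain:
  assumes "m \<in> sprime P \<inter> dprime (rel_inv P)"
  shows "\<exists>f N. f 0 = m \<and> (\<forall>k. (f k, f (Suc k)) \<in> P) \<and> (\<forall>k\<ge>N. f k = 0)
     \<and> (\<forall>k. f k \<in> sprime P \<inter> dprime (rel_inv P))"
proof -
  obtain f N where f: "f 0 = m" "\<And>k. (f k, f (Suc k)) \<in> P" "\<And>k. k \<ge> N \<Longrightarrow> f k = 0"
    using assms unfolding sprime_def rel_app_def by auto
  have "f k \<in> sprime P" for k
    unfolding sprime_def rel_app_def
    by (intro CollectI exI[of _ "\<lambda>n. f (n + k)"] conjI exI[of _ N]) (use f in auto)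
  moreover have "f k \<in> dprime (rel_inv P)" for k
  proof (induction k)
    case (Suc k)
    then show ?case using dprime_if_next[of "f (Suc k)" "f k" "rel_inv P"] f(2) by simp
  qed (use f assms in simp)
  ultimately show ?thesis using f by blast
qed

lemma exists_uniform_chains:
  fixes n :: nat
  assumes "\<forall>i<n. f i \<in> sprime P \<inter> dprime (rel_inv P)"
  shows "\<exists>c N. \<forall>i<n. c i 0 = f i \<and> (\<forall>k. (c i k, c i (Suc k)) \<in> P) \<and> (\<forall>k\<ge>N. c i k = 0)
    \<and> (\<forall>k. c i k \<in> sprime P \<inter> dprime (rel_inv P))"
proof -
  have "\<forall>i\<in>{..<n}. \<exists>c N. c 0 = f i \<and> (\<forall>k. (c k, c (Suc k)) \<in> P) \<and> (\<forall>k\<ge>N. c k = 0)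
      \<and> (\<forall>k. c k \<in> sprime P \<inter> dprime (rel_inv P))"
    using sprime_chain assms by blast
  then obtain c where "\<forall>i\<in>{..<n}. \<exists>N. c i 0 = f i \<and> (\<forall>k. (c i k, c i (Suc k)) \<in> P)
      \<and> (\<forall>k\<ge>N. c i k = 0) \<and> (\<forall>k. c i k \<in> sprime P \<inter> dprime (rel_inv P))"
    by (rule bchoice[elim_format]) blast
  then obtain M where c: "\<forall>i\<in>{..<n}. c i 0 = f i \<and> (\<forall>k. (c i k, c i (Suc k)) \<in> P)
      \<and> (\<forall>k\<ge>M i. c i k = 0) \<and> (\<forall>k. c i k \<in> sprime P \<inter> dprime (rel_inv P))"
    by (rule bchoice[elim_format]) blast
  have M_le: "M i \<le> (\<Sum>i<n. M i)" if "i < n" for i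
    using that by (intro member_le_sum) auto
  have "c i k = 0" if "i < n" "(\<Sum>i<n. M i) \<le> k" for i k
    using c M_le[OF that(1)] that by auto
  then show ?thesis
    using c by (intro exI[of _ c] exI[of _ "\<Sum>i<n. M i"]) auto
qed

lemma subset_set_plus_left:
  fixes A B :: "'a::monoid_add set"
  assumes "0 \<in> B"
  shows "A \<subseteq> set_plus A B"
proof
  fix a assume "a \<in> A"
  moreover have "a = a + 0" by simp
  ultimately show "a \<in> set_plus A B" using assms unfolding set_plus_def by blast
qed

lemma subset_set_plus_right:
  fixes A B :: "'a::monoid_add set"
  assumes "0 \<in> A"
  shows "B \<subseteq> set_plus A B"
proof
  fix b assume "b \<in> B"
  moreover have "b = 0 + b" by simp
  ultimately show "b \<in> set_plus A B" using assms unfolding set_plus_def by blast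
qed

section \<open>Linear combinations and linear relations in a module\<close>

locale rmodule = Modules.module s for s :: "'r::comm_ring_1 \<Rightarrow> 'm::ab_group_add \<Rightarrow> 'm"
begin

lemma submod_eq_subspace: "submod s = subspace"
  unfolding submod_def subspace_def ..

lemma rspan_eq_span: "rspan s = span"
  unfolding rspan_def span_explicit ..

lemma rdependent_eq_dependent: "rdependent s = dependent"
  unfolding rdependent_def dependent_explicit ..

lemma subspace_set_plus:
  assumes A: "subspace A" and B: "subspace B"
  shows "subspace (set_plus A B)"
proof (rule subspaceI)
  show "0 \<in> set_plus A B"
    unfolding set_plus_def using subspace_0[OF A] subspace_0[OF B] by force
  show "x + y \<in> set_plus A B" if x: "x \<in> set_plus A B" and y: "y \<in> set_plus A B" for x y
  proof -
    obtain a b a' b' where "x = a + b" "y = a' + b'" "a \<in> A" "b \<in> B" "a' \<in> A" "b' \<in> B"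
      using x y unfolding set_plus_def by blast
    moreover have "(a + b) + (a' + b') = (a + a') + (b + b')" by (simp add: algebra_simps)
    ultimately show ?thesis
      unfolding set_plus_def using subspace_add[OF A] subspace_add[OF B] by fastforce
  qed
  show "s c x \<in> set_plus A B" if "x \<in> set_plus A B" for c x
    using that subspace_scale[OF A] subspace_scale[OF B] unfolding set_plus_def
    by (fastforce simp: scale_right_distrib)
qed

lemma set_plus_subset_subspace: "subspace N \<Longrightarrow> A \<subseteq> N \<Longrightarrow> B \<subseteq> N \<Longrightarrow> set_plus A B \<subseteq> N"
  unfolding set_plus_def using subspace_add by blast

definition lincomb :: "nat \<Rightarrow> (nat \<Rightarrow> 'r) \<Rightarrow> (nat \<Rightarrow> 'm) \<Rightarrow> 'm" where
  "lincomb n c v = (\<Sum>i<n. s (c i) (v i))"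

lemma lincomb_cong:
  "(\<And>i. i < n \<Longrightarrow> c i = c' i) \<Longrightarrow> (\<And>i. i < n \<Longrightarrow> v i = v' i) \<Longrightarrow> lincomb n c v = lincomb n c' v'"
  unfolding lincomb_def by (rule sum.cong) auto

lemma lincomb_add_left: "lincomb n (\<lambda>i. a i + b i) v = lincomb n a v + lincomb n b v"
  unfolding lincomb_def scale_left_distrib sum.distrib ..

lemma lincomb_diff_left: "lincomb n (\<lambda>i. a i - b i) v = lincomb n a v - lincomb n b v"
  unfolding lincomb_def scale_left_diff_distrib sum_subtractf ..

lemma lincomb_add_right: "lincomb n c (\<lambda>i. v i + w i) = lincomb n c v + lincomb n c w"
  unfolding lincomb_def scale_right_distrib sum.distrib ..

lemma lincomb_diff_right: "lincomb n c (\<lambda>i. v i - w i) = lincomb n c v - lincomb n c w"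
  unfolding lincomb_def scale_right_diff_distrib sum_subtractf ..

lemma scale_lincomb: "s a (lincomb n c v) = lincomb n (\<lambda>i. a * c i) v"
  unfolding lincomb_def scale_sum_right by simp

lemma lincomb_sum_right: "lincomb n c (\<lambda>i. \<Sum>k\<in>K. w k i) = (\<Sum>k\<in>K. lincomb n c (w k))"
  unfolding lincomb_def scale_sum_right by (rule sum.swap)

lemma lincomb_zero_right [simp]: "lincomb n c (\<lambda>_. 0) = 0"
  unfolding lincomb_def by simp

lemma lincomb_basis_vec: "k < n \<Longrightarrow> lincomb n (basis_vec k) v = v k"
  unfolding lincomb_def basis_vec_def
  by (subst sum.cong[OF refl, of _ _ "\<lambda>i. if k = i then v i else 0"]) auto

lemma lincomb_lincomb:
  "lincomb n c (\<lambda>k. lincomb n (a k) v) = lincomb n (\<lambda>j. \<Sum>k<n. c k * a k j) v"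
proof -
  have "lincomb n c (\<lambda>k. lincomb n (a k) v) = (\<Sum>k<n. \<Sum>j<n. s (c k * a k j) (v j))"
    unfolding lincomb_def scale_sum_right by simp
  also have "\<dots> = lincomb n (\<lambda>j. \<Sum>k<n. c k * a k j) v"
    unfolding lincomb_def scale_sum_left by (rule sum.swap)
  finally show ?thesis .
qed

lemma lincomb_inverse:
  assumes "inverts_on n a b" "i < n"
  shows "lincomb n (a i) (\<lambda>k. lincomb n (b k) v) = v i"
proof -
  have "lincomb n (a i) (\<lambda>k. lincomb n (b k) v) = lincomb n (basis_vec i) v"
    unfolding lincomb_lincomb using assms unfolding inverts_on_def by (intro lincomb_cong) auto
  then show ?thesis using lincomb_basis_vec[OF assms(2)] by simp
qed

lemma subspace_lincomb: "subspace Z \<Longrightarrow> (\<And>i. i < n \<Longrightarrow> v i \<in> Z) \<Longrightarrow> lincomb n c v \<in> Z"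
  unfolding lincomb_def by (auto intro!: subspace_sum subspace_scale)

lemma subspace_range_lincomb: "subspace (range (\<lambda>c. lincomb n c v))"
proof (rule subspaceI)
  have "lincomb n (\<lambda>_. 0) v = 0" unfolding lincomb_def by simp
  then show "0 \<in> range (\<lambda>c. lincomb n c v)" by (metis rangeI)
  show "x + y \<in> range (\<lambda>c. lincomb n c v)"
    if "x \<in> range (\<lambda>c. lincomb n c v)" "y \<in> range (\<lambda>c. lincomb n c v)" for x y
  proof -
    from that obtain a b where "x = lincomb n a v" "y = lincomb n b v" by blast
    then have "x + y = lincomb n (\<lambda>i. a i + b i) v" by (simp add: lincomb_add_left)
    then show ?thesis by (metis rangeI)
  qed
  show "s a x \<in> range (\<lambda>c. lincomb n c v)" if "x \<in> range (\<lambda>c. lincomb n c v)" for a x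
    using that scale_lincomb by auto
qed

lemma subspace_range_scale: "subspace (range (\<lambda>c. s c x))"
proof (rule subspaceI)
  show "0 \<in> range (\<lambda>c. s c x)" using scale_zero_left by (metis rangeI)
next
  fix y z assume "y \<in> range (\<lambda>c. s c x)" "z \<in> range (\<lambda>c. s c x)"
  then show "y + z \<in> range (\<lambda>c. s c x)" by (auto simp: scale_left_distrib[symmetric])
next
  fix c y assume "y \<in> range (\<lambda>c. s c x)"
  then show "s c y \<in> range (\<lambda>c. s c x)" by auto
qed

definition mat_act :: "nat \<Rightarrow> (nat \<Rightarrow> nat \<Rightarrow> 'r) \<Rightarrow> (nat \<Rightarrow> 'm) \<Rightarrow> nat \<Rightarrow> 'm" where
  "mat_act n a v i = lincomb n (a i) v"

lemma subspace_funpow_mat_act: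
  "subspace Z \<Longrightarrow> (\<And>j. j < n \<Longrightarrow> v j \<in> Z) \<Longrightarrow> i < n \<Longrightarrow> (mat_act n a ^^ k) v i \<in> Z"
  by (induction k arbitrary: i) (auto simp: mat_act_def intro: subspace_lincomb)

lemma funpow_mat_act_zero [simp]: "(mat_act n a ^^ k) (\<lambda>_. 0) = (\<lambda>_. 0)"
  by (induction k) (auto simp: mat_act_def[abs_def])

lemma linear_relation_zero: "linear_relation s P \<Longrightarrow> (0, 0) \<in> P"
  unfolding linear_relation_def by blast

lemma linear_relation_add: "linear_relation s P \<Longrightarrow> (a, b) \<in> P \<Longrightarrow> (c, d) \<in> P \<Longrightarrow> (a + c, b + d) \<in> P"
  unfolding linear_relation_def by blast

lemma linear_relation_scale: "linear_relation s P \<Longrightarrow> (a, b) \<in> P \<Longrightarrow> (s r a, s r b) \<in> P"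
  unfolding linear_relation_def by blast

lemma linear_relation_diff: "linear_relation s P \<Longrightarrow> (a, b) \<in> P \<Longrightarrow> (c, d) \<in> P \<Longrightarrow> (a - c, b - d) \<in> P"
  using linear_relation_add[of P a b "- c" "- d"] linear_relation_scale[of P c d "- 1"] by simp

lemma linear_relation_sum:
  "linear_relation s P \<Longrightarrow> (\<And>i. i \<in> I \<Longrightarrow> (a i, b i) \<in> P) \<Longrightarrow> (sum a I, sum b I) \<in> P"
  by (induction I rule: infinite_finite_induct) (auto simp: linear_relation_zero linear_relation_add)

lemma linear_relation_rel_inv: "linear_relation s P \<Longrightarrow> linear_relation s (rel_inv P)"
  unfolding linear_relation_def by auto

lemma linear_relation_lincomb:
  "linear_relation s P \<Longrightarrow> (\<And>i. i < n \<Longrightarrow> (v i, w i) \<in> P) \<Longrightarrow> (lincomb n c v, lincomb n c w) \<in> P"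
  unfolding lincomb_def by (auto intro!: linear_relation_sum linear_relation_scale)

lemma linear_relation_funpow_mat_act:
  "linear_relation s P \<Longrightarrow> (\<And>j. j < n \<Longrightarrow> (v j, w j) \<in> P) \<Longrightarrow> i < n
    \<Longrightarrow> ((mat_act n a ^^ k) v i, (mat_act n a ^^ k) w i) \<in> P"
  by (induction k arbitrary: i) (auto simp: mat_act_def intro: linear_relation_lincomb)

lemma subspace_dprime: assumes "linear_relation s P" shows "subspace (dprime P)"
proof (rule subspaceI)
  show "0 \<in> dprime P" unfolding dprime_def rel_app_def
    using linear_relation_zero[OF assms] by (auto intro!: exI[of _ "\<lambda>_. 0"])
  show "x + y \<in> dprime P" if x: "x \<in> dprime P" and y: "y \<in> dprime P" for x y
  proof -
    obtain f g where "f 0 = x" "\<And>n. (f n, f (Suc n)) \<in> P" "g 0 = y" "\<And>n. (g n, g (Suc n)) \<in> P"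
      using x y unfolding dprime_def rel_app_def by auto
    then show ?thesis unfolding dprime_def rel_app_def using linear_relation_add[OF assms]
      by (intro CollectI exI[of _ "\<lambda>n. f n + g n"]) auto
  qed
  show "s c x \<in> dprime P" if x: "x \<in> dprime P" for c x
  proof -
    obtain f where "f 0 = x" "\<And>n. (f n, f (Suc n)) \<in> P"
      using x unfolding dprime_def rel_app_def by auto
    then show ?thesis unfolding dprime_def rel_app_def using linear_relation_scale[OF assms]
      by (intro CollectI exI[of _ "\<lambda>n. s c (f n)"]) auto
  qed
qed

lemma subspace_sprime: assumes "linear_relation s P" shows "subspace (sprime P)"
proof (rule subspaceI)
  show "0 \<in> sprime P" unfolding sprime_def rel_app_def
    using linear_relation_zero[OF assms] by (auto intro!: exI[of _ "\<lambda>_. 0"])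
  show "x + y \<in> sprime P" if x: "x \<in> sprime P" and y: "y \<in> sprime P" for x y
  proof -
    obtain f g N N' where "f 0 = x" "\<And>n. (f n, f (Suc n)) \<in> P" "\<And>n. n \<ge> N \<Longrightarrow> f n = 0"
      "g 0 = y" "\<And>n. (g n, g (Suc n)) \<in> P" "\<And>n. n \<ge> N' \<Longrightarrow> g n = 0"
      using x y unfolding sprime_def rel_app_def by (auto 0 0) metis
    then show ?thesis unfolding sprime_def rel_app_def using linear_relation_add[OF assms]
      by (intro CollectI exI[of _ "\<lambda>n. f n + g n"] conjI exI[of _ "max N N'"]) auto
  qed
  show "s c x \<in> sprime P" if x: "x \<in> sprime P" for c x
  proof -
    obtain f N where "f 0 = x" "\<And>n. (f n, f (Suc n)) \<in> P" "\<And>n. n \<ge> N \<Longrightarrow> f n = 0"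
      using x unfolding sprime_def rel_app_def by auto
    then show ?thesis unfolding sprime_def rel_app_def using linear_relation_scale[OF assms]
      by (intro CollectI exI[of _ "\<lambda>n. s c (f n)"] conjI exI[of _ N]) auto
  qed
qed

text \<open>Follow each \<open>f\<^sub>i\<close> along a \<open>P\<close>-chain \<open>c\<^sub>i 0 = f\<^sub>i, c\<^sub>i 1, \<dots>\<close> that vanishes from step \<open>N\<close>
  on, and put \<open>g = \<Sum>\<^sub>k\<^sub>\<le>\<^sub>N D\<^sup>-\<^sup>(\<^sup>k\<^sup>+\<^sup>1\<^sup>) c k\<close>. Then \<open>D g - f\<close> is the same sum with every chain
  advanced by one step, which is \<open>P\<close>-related to \<open>g\<close> term by term.\<close>
lemma exists_forward_correction:
  assumes P: "linear_relation s P" and inv: "inverts_on n d d'"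
    and f: "\<And>i. i < n \<Longrightarrow> f i \<in> sprime P \<inter> dprime (rel_inv P)"
  shows "\<exists>g. \<forall>i<n. g i \<in> sprime P \<inter> dprime (rel_inv P) \<and> (g i, lincomb n (d i) g - f i) \<in> P"
proof -
  define Z where "Z = sprime P \<inter> dprime (rel_inv P)"
  have Z: "subspace Z" unfolding Z_def
    by (intro subspace_inter subspace_sprime subspace_dprime P linear_relation_rel_inv)
  obtain c N where c: "\<forall>i<n. c i 0 = f i \<and> (\<forall>k. (c i k, c i (Suc k)) \<in> P)
      \<and> (\<forall>k\<ge>N. c i k = 0) \<and> (\<forall>k. c i k \<in> Z)"
    using exists_uniform_chains[of n f P] f unfolding Z_def by blast
  define V where "V k = (\<lambda>i. if i < n then c i k else 0)" for k
  define F where "F = mat_act n d'"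
  define g where "g = (\<lambda>i. \<Sum>k<Suc N. (F ^^ Suc k) (V k) i)"
  have VN: "V (Suc N) = (\<lambda>_. 0)"
    unfolding V_def using c by auto
  show ?thesis
  proof (intro exI allI impI conjI)
    fix i assume i: "i < n"
    have "lincomb n (d i) g = (\<Sum>k<Suc N. lincomb n (d i) ((F ^^ Suc k) (V k)))"
      unfolding g_def lincomb_sum_right ..
    also have "\<dots> = (\<Sum>k<Suc N. (F ^^ k) (V k) i)"
      unfolding F_def funpow.simps(2) o_def mat_act_def[abs_def]
      using lincomb_inverse[OF inv i] by simp
    also have "\<dots> = f i + (\<Sum>k<N. (F ^^ Suc k) (V (Suc k)) i)"
      unfolding sum.lessThan_Suc_shift using i c by (simp add: V_def)
    also have "(\<Sum>k<N. (F ^^ Suc k) (V (Suc k)) i) = (\<Sum>k<Suc N. (F ^^ Suc k) (V (Suc k)) i)"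
      using VN unfolding F_def by (simp del: funpow.simps)
    finally have "lincomb n (d i) g - f i = (\<Sum>k<Suc N. (F ^^ Suc k) (V (Suc k)) i)"
      by simp
    moreover have "(g i, \<Sum>k<Suc N. (F ^^ Suc k) (V (Suc k)) i) \<in> P"
      unfolding g_def F_def using c i
      by (intro linear_relation_sum[OF P] linear_relation_funpow_mat_act[OF P]) (auto simp: V_def)
    ultimately show "(g i, lincomb n (d i) g - f i) \<in> P" by simp
    have "g i \<in> Z"
      unfolding g_def F_def using c i
      by (intro subspace_sum[OF Z] subspace_funpow_mat_act[OF Z]) (auto simp: V_def subspace_0[OF Z])
    then show "g i \<in> sprime P \<inter> dprime (rel_inv P)" unfolding Z_def .
  qed
qed

text \<open>The backward case is the forward one for \<open>P\<inverse>\<close> and \<open>D\<inverse>\<close>.\<close>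
lemma exists_backward_correction:
  assumes P: "linear_relation s P" and inv: "inverts_on n d d'" "inverts_on n d' d"
    and f: "\<And>i. i < n \<Longrightarrow> f i \<in> sprime (rel_inv P) \<inter> dprime P"
  shows "\<exists>g. \<forall>i<n. g i \<in> sprime (rel_inv P) \<inter> dprime P \<and> (g i, lincomb n (d i) g - f i) \<in> P"
proof -
  define Z where "Z = sprime (rel_inv P) \<inter> dprime P"
  have Z: "subspace Z" unfolding Z_def
    by (intro subspace_inter subspace_sprime subspace_dprime P linear_relation_rel_inv)
  define f' where "f' i = - lincomb n (d' i) f" for i
  have "f' i \<in> Z" if "i < n" for i
    unfolding f'_def using f by (intro subspace_neg[OF Z] subspace_lincomb[OF Z]) (auto simp: Z_def)
  then obtain g' where g': "\<forall>i<n. g' i \<in> Z \<and> (lincomb n (d' i) g' - f' i, g' i) \<in> P"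
    using exists_forward_correction[OF linear_relation_rel_inv[OF P] inv(2), of f']
    unfolding Z_def by auto
  define g where "g i = lincomb n (d' i) (\<lambda>j. g' j + f j)" for i
  show ?thesis
  proof (intro exI allI impI conjI)
    fix i assume i: "i < n"
    have "lincomb n (d i) g = g' i + f i"
      unfolding g_def using lincomb_inverse[OF inv(1) i] .
    moreover have "g i = lincomb n (d' i) g' - f' i"
      unfolding g_def f'_def lincomb_add_right by simp
    ultimately show "(g i, lincomb n (d i) g - f i) \<in> P" using g' i by simp
    have "g i \<in> Z"
      unfolding g_def using g' f by (intro subspace_lincomb[OF Z] subspace_add[OF Z]) (auto simp: Z_def)
    then show "g i \<in> sprime (rel_inv P) \<inter> dprime P" unfolding Z_def .
  qed
qed

end

section \<open>The free module \<open>R\<^sup>n\<close>\<close>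

lemma sum_apply: "sum f A x = (\<Sum>a\<in>A. f a x)"
  by (induction A rule: infinite_finite_induct) auto

lemma fscale_apply [simp]: "fscale c x j = c * x j"
  unfolding fscale_def ..

interpretation FS: rmodule "fscale :: 'r::comm_ring_1 \<Rightarrow> (nat \<Rightarrow> 'r) \<Rightarrow> nat \<Rightarrow> 'r"
  by unfold_locales (auto simp: fun_eq_iff algebra_simps)

definition coord_space :: "nat \<Rightarrow> (nat \<Rightarrow> 'r::zero) set" where
  "coord_space n = {x. \<forall>i\<ge>n. x i = 0}"

lemma FS_lincomb_apply: "FS.lincomb n c v j = (\<Sum>i<n. c i * v i j)"
  unfolding FS.lincomb_def sum_apply by simp

lemma subspace_coord_space: "FS.subspace (coord_space n)"
  unfolding FS.subspace_def coord_space_def by simp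

lemma basis_vec_in_coord_space: "k < n \<Longrightarrow> basis_vec k \<in> coord_space n"
  unfolding coord_space_def basis_vec_def by simp

lemma lincomb_coords_basis_vec: "x \<in> coord_space n \<Longrightarrow> FS.lincomb n x basis_vec = x"
  unfolding fun_eq_iff FS_lincomb_apply basis_vec_def coord_space_def
  by (auto simp: if_distrib cong: if_cong)

lemma free_mod_coord_space: "free_mod (coord_space n :: (nat \<Rightarrow> 'r::comm_ring_1) set)"
  unfolding free_mod_def FS.rdependent_eq_dependent FS.rspan_eq_span
proof (intro exI[of _ "basis_vec ` {..<n}"] conjI)
  show "basis_vec ` {..<n} \<subseteq> (coord_space n :: (nat \<Rightarrow> 'r) set)"
    using basis_vec_in_coord_space by blast
  show "\<not> FS.dependent (basis_vec ` {..<n} :: (nat \<Rightarrow> 'r) set)"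
  proof
    assume "FS.dependent (basis_vec ` {..<n} :: (nat \<Rightarrow> 'r) set)"
    then obtain t u v where t: "finite t" "t \<subseteq> basis_vec ` {..<n}" "(\<Sum>w\<in>t. fscale (u w) w) = 0"
      and v: "v \<in> t" "u v \<noteq> (0::'r)"
      unfolding FS.dependent_explicit by blast
    obtain k where k: "v = basis_vec k" using t(2) v(1) by auto
    have "(\<Sum>w\<in>t. fscale (u w) w) k = (\<Sum>w\<in>t. if w = v then u w else 0)"
      unfolding sum_apply
    proof (rule sum.cong[OF refl])
      fix w assume "w \<in> t"
      then obtain k' where w: "w = basis_vec k'" using t(2) by auto
      show "fscale (u w) w k = (if w = v then u w else 0)"
      proof (cases "k' = k")
        case False
        then have "w k = 0" "v k = 1" using w k by (simp_all add: basis_vec_def)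
        then show ?thesis by auto
      qed (use w k in \<open>simp add: basis_vec_def\<close>)
    qed
    also have "\<dots> = u v" using t(1) v(1) by simp
    finally have "(\<Sum>w\<in>t. fscale (u w) w) k = u v" .
    then show False using t(3) v(2) by simp
  qed
  show "FS.span (basis_vec ` {..<n}) = (coord_space n :: (nat \<Rightarrow> 'r) set)"
  proof
    show "FS.span (basis_vec ` {..<n}) \<subseteq> (coord_space n :: (nat \<Rightarrow> 'r) set)"
      by (intro FS.span_minimal subspace_coord_space) (use basis_vec_in_coord_space in blast)
    show "(coord_space n :: (nat \<Rightarrow> 'r) set) \<subseteq> FS.span (basis_vec ` {..<n})"
    proof
      fix x :: "nat \<Rightarrow> 'r" assume "x \<in> coord_space n"
      then have "x = FS.lincomb n x basis_vec" by (simp add: lincomb_coords_basis_vec)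
      also have "\<dots> \<in> FS.span (basis_vec ` {..<n})"
        by (intro FS.subspace_lincomb FS.subspace_span FS.span_base) simp
      finally show "x \<in> FS.span (basis_vec ` {..<n})" .
    qed
  qed
qed

lemma maximal_submod_plus_range_fscale:
  assumes N: "maximal_submod X N" and x: "x \<in> X" "x \<notin> N" and X: "FS.subspace X"
  shows "set_plus N (range (\<lambda>c. fscale c x)) = X"
proof -
  have N_sub: "FS.subspace N" "N \<subseteq> X"
    using N unfolding maximal_submod_def FS.submod_eq_subspace by auto
  define N' where "N' = set_plus N (range (\<lambda>c. fscale c x))"
  have "FS.subspace N'"
    unfolding N'_def by (intro FS.subspace_set_plus FS.subspace_range_scale N_sub)
  moreover have "N \<subseteq> N'"
    unfolding N'_def by (rule subset_set_plus_left) (auto intro: image_eqI[of _ _ 0])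
  moreover have "N' \<subseteq> X"
    unfolding N'_def using x(1) N_sub
    by (intro FS.set_plus_subset_subspace X) (auto intro: FS.subspace_scale[OF X])
  moreover have "x \<in> N'"
    unfolding N'_def using FS.subspace_0[OF N_sub(1)]
    by (intro subsetD[OF subset_set_plus_right]) (auto intro: image_eqI[of _ _ 1])
  ultimately show ?thesis
    using N x(2) unfolding N'_def maximal_submod_def FS.submod_eq_subspace by blast
qed

context
  assumes local: "local_ring TYPE('r::comm_ring_1)"
begin

lemma maximal_submod_coord:
  assumes "k < n"
  shows "maximal_submod (coord_space n) {y \<in> coord_space n. (y k :: 'r) \<in> max_ideal}"
    (is "maximal_submod _ ?N")
  unfolding maximal_submod_def FS.submod_eq_subspace
proof (intro conjI allI impI)
  show "FS.subspace ?N"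
    unfolding FS.subspace_def coord_space_def
    by (auto simp: max_ideal_add[OF local] max_ideal_mult_left)
  show "?N \<noteq> coord_space n"
  proof
    assume "?N = coord_space n"
    then have "basis_vec k \<in> ?N" using basis_vec_in_coord_space[OF assms] by simp
    then show False by (simp add: basis_vec_def)
  qed
  fix N' assume N': "FS.subspace N' \<and> ?N \<subseteq> N' \<and> N' \<subseteq> coord_space n"
  show "N' = ?N \<or> N' = coord_space n"
  proof (cases "N' = ?N")
    case False
    then obtain y where y: "y \<in> N'" "y \<notin> ?N" using N' by blast
    then obtain v where v: "v * y k = 1"
      using N' unit_if_not_in_max_ideal by (metis dvdE mult.commute mem_Collect_eq subsetD)
    have "z \<in> N'" if z: "z \<in> coord_space n" for z
    proof -
      have "z - fscale (z k * v) y \<in> ?N"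
        using z y N' v by (auto simp: coord_space_def mult.assoc)
      then have "z - fscale (z k * v) y + fscale (z k * v) y \<in> N'"
        using N' y by (blast intro: FS.subspace_add FS.subspace_scale)
      then show ?thesis by simp
    qed
    then show ?thesis using N' by blast
  qed simp
qed auto

text \<open>Nakayama's argument: if \<open>x \<notin> N\<close> then \<open>N + R x\<close> is everything, so each basis
  vector is \<open>y\<^sub>k + c\<^sub>k x\<close> with \<open>y\<^sub>k \<in> N\<close>, giving \<open>(1 - \<Sum> x\<^sub>k c\<^sub>k) x \<in> N\<close> with a unit factor.\<close>
lemma in_maximal_submod_if_coords_in_max_ideal:
  assumes N: "maximal_submod (coord_space n) N"
    and x: "x \<in> coord_space n" "\<And>i. i < n \<Longrightarrow> (x i :: 'r) \<in> max_ideal"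
  shows "x \<in> N"
proof (rule ccontr)
  assume "x \<notin> N"
  have N_sub: "FS.subspace N"
    using N unfolding maximal_submod_def FS.submod_eq_subspace by auto
  have "set_plus N (range (\<lambda>c. fscale c x)) = coord_space n"
    by (rule maximal_submod_plus_range_fscale[OF N x(1) \<open>x \<notin> N\<close> subspace_coord_space])
  then have "\<forall>k\<in>{..<n}. \<exists>y c. y \<in> N \<and> basis_vec k = y + fscale c x"
    using basis_vec_in_coord_space unfolding set_plus_def by blast
  then obtain y where "\<forall>k\<in>{..<n}. \<exists>c. y k \<in> N \<and> basis_vec k = y k + fscale c x"
    by (rule bchoice[elim_format]) blast
  then obtain c where yc: "\<forall>k\<in>{..<n}. y k \<in> N \<and> basis_vec k = y k + fscale (c k) x"
    by (rule bchoice[elim_format]) blast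
  define j where "j = (\<Sum>k<n. x k * c k)"
  have "x = FS.lincomb n x basis_vec" using x(1) by (simp add: lincomb_coords_basis_vec)
  also have "\<dots> = FS.lincomb n x (\<lambda>k. y k + fscale (c k) x)"
    using yc by (intro FS.lincomb_cong) auto
  also have "\<dots> = FS.lincomb n x y + fscale j x"
    unfolding FS.lincomb_add_right j_def by (simp add: FS.lincomb_def FS.scale_sum_left)
  finally have x_eq: "x = FS.lincomb n x y + fscale j x" .
  have "fscale (1 - j) x = x - fscale j x" by (simp add: FS.scale_left_diff_distrib)
  also have "\<dots> = FS.lincomb n x y" using x_eq by (subst diff_eq_eq)
  finally have "fscale (1 - j) x \<in> N" using yc by (auto intro: FS.subspace_lincomb N_sub)
  then have "fscale w (fscale (1 - j) x) \<in> N" for w by (rule FS.subspace_scale[OF N_sub])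
  moreover have "j \<in> max_ideal"
    unfolding j_def using x(2) by (intro max_ideal_sum[OF local] max_ideal_mult_right) auto
  then obtain w where "w * (1 - j) = 1"
    using unit_one_minus_max_ideal[OF local] by (metis dvdE mult.commute)
  ultimately show False using \<open>x \<notin> N\<close> by (metis FS.scale_one FS.scale_scale)
qed

lemma rad_coord_space: "rad (coord_space n) = {x \<in> coord_space n. \<forall>i<n. (x i :: 'r) \<in> max_ideal}"
  using maximal_submod_coord in_maximal_submod_if_coords_in_max_ideal unfolding rad_def by blast

end

definition right_mult :: "nat \<Rightarrow> (nat \<Rightarrow> nat \<Rightarrow> 'r::comm_ring_1) \<Rightarrow> (nat \<Rightarrow> 'r) \<Rightarrow> nat \<Rightarrow> 'r" where
  "right_mult n d x = (\<lambda>j. if j < n then \<Sum>i<n. x i * d i j else 0)"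

lemma right_mult_in_coord_space: "right_mult n d x \<in> coord_space n"
  unfolding right_mult_def coord_space_def by auto

lemma right_mult_inverse:
  assumes "inverts_on n d d'" "x \<in> coord_space n"
  shows "right_mult n d' (right_mult n d x) = x"
proof
  fix j
  show "right_mult n d' (right_mult n d x) j = x j"
  proof (cases "j < n")
    case True
    have "right_mult n d' (right_mult n d x) j = (\<Sum>i<n. \<Sum>k<n. x k * d k i * d' i j)"
      unfolding right_mult_def using True by (auto simp: sum_distrib_right intro: sum.cong)
    also have "\<dots> = (\<Sum>k<n. x k * (\<Sum>i<n. d k i * d' i j))"
      unfolding sum_distrib_left mult.assoc by (rule sum.swap)
    also have "\<dots> = (\<Sum>k<n. if k = j then x k else 0)"
      using assms(1) True unfolding inverts_on_def basis_vec_def by (intro sum.cong) auto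
    also have "\<dots> = x j" using True by simp
    finally show ?thesis .
  qed (use assms(2) in \<open>simp add: right_mult_def coord_space_def\<close>)
qed

lemma RT_module_right_mult:
  assumes "inverts_on n d d'" "inverts_on n d' d"
  shows "RT_module (coord_space n) (right_mult n d)"
  unfolding RT_module_def FS.submod_eq_subspace
proof (intro conjI subspace_coord_space)
  show "lin_on fscale fscale (coord_space n) (right_mult n d)"
    unfolding lin_on_def right_mult_def
    by (auto simp: fun_eq_iff algebra_simps sum.distrib sum_distrib_left)
  show "bij_betw (right_mult n d) (coord_space n) (coord_space n)"
    by (rule bij_betw_byWitness[where f' = "right_mult n d'"])
      (use right_mult_inverse[OF assms(1)] right_mult_inverse[OF assms(2)] right_mult_in_coord_space in auto)
qed

context rmodule
begin

lemma lincomb_right_mult: "lincomb n (right_mult n d x) v = lincomb n x (\<lambda>i. lincomb n (d i) v)"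
  unfolding lincomb_lincomb by (rule lincomb_cong) (auto simp: right_mult_def)

lemma lin_on_lincomb: "lin_on fscale s X (\<lambda>x. lincomb n x v)"
  unfolding lin_on_def fscale_def plus_fun_def by (simp add: lincomb_add_left scale_lincomb)

end

section \<open>Reductions\<close>

locale linrel = rmodule s for s :: "'r::comm_ring_1 \<Rightarrow> 'm::ab_group_add \<Rightarrow> 'm" +
  fixes C :: "('m \<times> 'm) set"
  assumes linear_relation_C: "linear_relation s C"
begin

lemma linear_relation_inv_C: "linear_relation s (rel_inv C)"
  by (rule linear_relation_rel_inv[OF linear_relation_C])

lemma subspace_sharp: "subspace (sharp C)"
  unfolding sharp_def
  by (intro subspace_inter subspace_dprime linear_relation_C linear_relation_inv_C)

lemma subspace_flat: "subspace (flat C)"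
  unfolding flat_def
  by (intro subspace_set_plus subspace_inter subspace_dprime subspace_sprime
      linear_relation_C linear_relation_inv_C)

lemma flat_subset_sharp: "flat C \<subseteq> sharp C"
  unfolding flat_def
  by (rule set_plus_subset_subspace[OF subspace_sharp])
    (use sprime_subset_dprime in \<open>auto simp: sharp_def\<close>)

lemma sharp_successor: "m \<in> sharp C \<Longrightarrow> \<exists>m'\<in>sharp C. (m, m') \<in> C"
  unfolding sharp_def using dprime_next[of m C] dprime_if_next[of _ m "rel_inv C"] by auto

lemma sharp_predecessor: "m \<in> sharp C \<Longrightarrow> \<exists>m'\<in>sharp C. (m', m) \<in> C"
  unfolding sharp_def using dprime_next[of m "rel_inv C"] dprime_if_next[of _ m C] by auto

text \<open>Split \<open>m = a + b\<close> along the definition of \<open>C\<flat>\<close>; successors \<open>a'\<close>, \<open>b'\<close> can be chosen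
  in the same parts, and the defect \<open>c = m' - a' - b'\<close> is a successor of \<open>0\<close>, hence in
  \<open>(C\<inverse>)'\<close>.\<close>
lemma flat_successor:
  assumes "m \<in> flat C" "(m, m') \<in> C" "m' \<in> sharp C"
  shows "m' \<in> flat C"
proof -
  obtain a b where ab: "m = a + b" "a \<in> dprime C" "a \<in> sprime (rel_inv C)"
    "b \<in> dprime (rel_inv C)" "b \<in> sprime C"
    using assms(1) unfolding flat_def set_plus_def by blast
  obtain a' where a': "(a, a') \<in> C" "a' \<in> dprime C" using dprime_next[of a C] ab by blast
  have a's: "a' \<in> sprime (rel_inv C)" using sprime_if_next[of a' a "rel_inv C"] a' ab by simp
  obtain b' where b': "(b, b') \<in> C" "b' \<in> sprime C" using sprime_next[of b C] ab by blast
  have b'd: "b' \<in> dprime (rel_inv C)" using dprime_if_next[of b' b "rel_inv C"] b' ab by simp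
  define c where "c = m' - a' - b'"
  have "(0, c) \<in> C"
    using linear_relation_diff[OF linear_relation_C linear_relation_diff[OF linear_relation_C assms(2) a'(1)] b'(1)]
    unfolding c_def ab(1) by simp
  then have cs: "c \<in> sprime (rel_inv C)"
    using sprime_if_next[of c 0 "rel_inv C"] subspace_0[OF subspace_sprime[OF linear_relation_inv_C]] by simp
  have cd: "c \<in> dprime C"
    unfolding c_def using assms(3) a'(2) b' sprime_subset_dprime unfolding sharp_def
    by (blast intro: subspace_diff[OF subspace_dprime[OF linear_relation_C]])
  have "m' = (a' + c) + b'" unfolding c_def by simp
  moreover have "a' + c \<in> dprime C \<inter> sprime (rel_inv C)"
    using a' a's cs cd subspace_add[OF subspace_dprime[OF linear_relation_C]]
      subspace_add[OF subspace_sprime[OF linear_relation_inv_C]] by blast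
  ultimately show ?thesis unfolding flat_def set_plus_def using b' b'd by blast
qed

lemma exists_flat_correction:
  assumes inv: "inverts_on n d d'" "inverts_on n d' d" and f: "\<And>i. i < n \<Longrightarrow> f i \<in> flat C"
  shows "\<exists>g. \<forall>i<n. g i \<in> flat C \<and> (g i, lincomb n (d i) g - f i) \<in> C"
proof -
  have "\<forall>i\<in>{..<n}. \<exists>a b. f i = a + b \<and> a \<in> sprime (rel_inv C) \<inter> dprime C
      \<and> b \<in> sprime C \<inter> dprime (rel_inv C)"
    using f unfolding flat_def set_plus_def by blast
  then obtain a where "\<forall>i\<in>{..<n}. \<exists>b. f i = a i + b \<and> a i \<in> sprime (rel_inv C) \<inter> dprime C
      \<and> b \<in> sprime C \<inter> dprime (rel_inv C)"
    by (rule bchoice[elim_format]) blast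
  then obtain b where ab: "\<forall>i\<in>{..<n}. f i = a i + b i \<and> a i \<in> sprime (rel_inv C) \<inter> dprime C
      \<and> b i \<in> sprime C \<inter> dprime (rel_inv C)"
    by (rule bchoice[elim_format]) blast
  obtain g\<^sub>a where ga: "\<forall>i<n. g\<^sub>a i \<in> sprime (rel_inv C) \<inter> dprime C
      \<and> (g\<^sub>a i, lincomb n (d i) g\<^sub>a - a i) \<in> C"
    using exists_backward_correction[OF linear_relation_C inv, of a] ab by blast
  obtain g\<^sub>b where gb: "\<forall>i<n. g\<^sub>b i \<in> sprime C \<inter> dprime (rel_inv C)
      \<and> (g\<^sub>b i, lincomb n (d i) g\<^sub>b - b i) \<in> C"
    using exists_forward_correction[OF linear_relation_C inv(1), of b] ab by blast
  show ?thesis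
  proof (intro exI[of _ "\<lambda>i. g\<^sub>a i + g\<^sub>b i"] allI impI conjI)
    fix i assume i: "i < n"
    show "g\<^sub>a i + g\<^sub>b i \<in> flat C"
      unfolding flat_def set_plus_def using ga gb i by blast
    have "(g\<^sub>a i + g\<^sub>b i, (lincomb n (d i) g\<^sub>a - a i) + (lincomb n (d i) g\<^sub>b - b i)) \<in> C"
      using linear_relation_add[OF linear_relation_C] ga gb i by blast
    then show "(g\<^sub>a i + g\<^sub>b i, lincomb n (d i) (\<lambda>i. g\<^sub>a i + g\<^sub>b i) - f i) \<in> C"
      using ab i by (simp add: lincomb_add_right algebra_simps)
  qed
qed

end

locale local_linrel = linrel s C for s :: "'r::comm_ring_1 \<Rightarrow> 'm::ab_group_add \<Rightarrow> 'm" and C +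
  assumes local_ring: "local_ring TYPE('r)"
    and JM_subset: "JM s \<subseteq> set_plus (sprime (rel_inv C)) (sprime C)"
begin

lemma scale_max_ideal_in_flat:
  assumes "r \<in> max_ideal" "m \<in> sharp C"
  shows "s r m \<in> flat C"
proof -
  have "s r m \<in> {s r m | r m. r \<in> max_ideal}" using assms(1) by blast
  then have "s r m \<in> JM s" unfolding JM_def rspan_eq_span by (rule span_base)
  then obtain u v where uv: "s r m = u + v" "u \<in> sprime (rel_inv C)" "v \<in> sprime C"
    using JM_subset unfolding set_plus_def by blast
  have rm: "s r m \<in> dprime C" "s r m \<in> dprime (rel_inv C)"
    using subspace_scale[OF subspace_sharp assms(2)] unfolding sharp_def by auto
  have "u = s r m - v" using uv(1) by simp
  also have "\<dots> \<in> dprime C"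
    using rm(1) uv(3) sprime_subset_dprime by (blast intro: subspace_diff[OF subspace_dprime[OF linear_relation_C]])
  finally have u: "u \<in> dprime C" .
  have "v = s r m - u" using uv(1) by simp
  also have "\<dots> \<in> dprime (rel_inv C)"
    using rm(2) uv(2) sprime_subset_dprime by (blast intro: subspace_diff[OF subspace_dprime[OF linear_relation_inv_C]])
  finally have v: "v \<in> dprime (rel_inv C)" .
  show ?thesis
    unfolding flat_def set_plus_def using uv u v by blast
qed

end

locale min_generators = local_linrel s C for s :: "'r::comm_ring_1 \<Rightarrow> 'm::ab_group_add \<Rightarrow> 'm" and C +
  fixes S :: "'m set" and m :: "nat \<Rightarrow> 'm" and n :: nat
  assumes S_sharp: "S \<subseteq> sharp C"
    and S_generates: "sharp C \<subseteq> set_plus (flat C) (span S)"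
    and S_minimal: "\<And>S'. finite S' \<Longrightarrow> S' \<subseteq> sharp C \<Longrightarrow> sharp C \<subseteq> set_plus (flat C) (span S')
      \<Longrightarrow> card S \<le> card S'"
    and m_enumerates: "bij_betw m {..<n} S"
begin

lemma m_in_S: "i < n \<Longrightarrow> m i \<in> S"
  using m_enumerates unfolding bij_betw_def by auto

lemma finite_S: "finite S"
  using m_enumerates bij_betw_finite by blast

lemma m_in_sharp: "i < n \<Longrightarrow> m i \<in> sharp C"
  using m_in_S S_sharp by blast

lemma lincomb_in_sharp: "lincomb n c m \<in> sharp C"
  by (intro subspace_lincomb subspace_sharp m_in_sharp)

lemma sharp_decomp: "z \<in> sharp C \<Longrightarrow> \<exists>\<phi> c. \<phi> \<in> flat C \<and> z = \<phi> + lincomb n c m"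
proof -
  assume "z \<in> sharp C"
  have "S \<subseteq> range (\<lambda>c. lincomb n c m)"
  proof
    fix x assume "x \<in> S"
    then obtain i where "i < n" "x = m i" using m_enumerates unfolding bij_betw_def by auto
    then have "x = lincomb n (basis_vec i) m" by (simp add: lincomb_basis_vec)
    then show "x \<in> range (\<lambda>c. lincomb n c m)" by blast
  qed
  then have "span S \<subseteq> range (\<lambda>c. lincomb n c m)"
    by (intro span_minimal subspace_range_lincomb)
  then show ?thesis
    using S_generates \<open>z \<in> sharp C\<close> unfolding set_plus_def by blast
qed

text \<open>If \<open>c\<^sub>k\<close> were a unit, \<open>m\<^sub>k\<close> would lie in \<open>C\<flat> + span (S - {m\<^sub>k})\<close>, contradicting the
  minimality of \<open>S\<close>.\<close>
lemma coeff_in_max_ideal_if_lincomb_in_flat: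
  assumes comb: "lincomb n c m \<in> flat C" and k: "k < n"
  shows "c k \<in> max_ideal"
proof (rule ccontr)
  assume "c k \<notin> max_ideal"
  then have "c k dvd 1" by (rule unit_if_not_in_max_ideal)
  then obtain u where u: "u * c k = 1" by (auto elim!: dvdE simp: mult.commute)
  define S' where "S' = S - {m k}"
  define Q where "Q = set_plus (flat C) (span S')"
  have Q: "subspace Q" unfolding Q_def by (intro subspace_set_plus subspace_flat subspace_span)
  have flat_Q: "flat C \<subseteq> Q"
    unfolding Q_def by (rule subset_set_plus_left) (simp add: span_zero)
  have m_Q: "m i \<in> Q" if "i < n" "i \<noteq> k" for i
  proof -
    have "m i \<in> S'"
      unfolding S'_def using that k m_in_S m_enumerates unfolding bij_betw_def inj_on_def by auto
    then show ?thesis unfolding Q_def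
      using subset_set_plus_right[OF subspace_0[OF subspace_flat]] span_base by blast
  qed
  have "s u (lincomb n c m) = m k + (\<Sum>i\<in>{..<n} - {k}. s (u * c i) (m i))"
    unfolding lincomb_def using k
    by (subst sum.remove[of _ k]) (auto simp: scale_right_distrib scale_sum_right u)
  then have "m k = s u (lincomb n c m) - (\<Sum>i\<in>{..<n} - {k}. s (u * c i) (m i))"
    by (simp add: algebra_simps)
  also have "\<dots> \<in> Q"
    using comb flat_Q m_Q
    by (intro subspace_diff[OF Q] subspace_scale[OF Q] subspace_sum[OF Q]) auto
  finally have "S \<subseteq> Q"
    using m_Q m_enumerates unfolding bij_betw_def by auto
  then have "sharp C \<subseteq> Q"
    using S_generates set_plus_subset_subspace[OF Q flat_Q span_minimal[OF _ Q]] by blast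
  moreover have "finite S'" "S' \<subseteq> sharp C"
    unfolding S'_def using finite_S S_sharp by auto
  ultimately have "card S \<le> card S'" using S_minimal unfolding Q_def by blast
  moreover have "card S' < card S"
    unfolding S'_def using m_in_S[OF k] finite_S by (rule card_Diff1_less[rotated])
  ultimately show False by simp
qed

lemma lincomb_in_flat_iff: "lincomb n c m \<in> flat C \<longleftrightarrow> (\<forall>k<n. c k \<in> max_ideal)"
proof
  assume c: "\<forall>k<n. c k \<in> max_ideal"
  show "lincomb n c m \<in> flat C"
    unfolding lincomb_def
  proof (rule subspace_sum[OF subspace_flat])
    fix i assume "i \<in> {..<n}"
    then show "s (c i) (m i) \<in> flat C" using c by (simp add: scale_max_ideal_in_flat m_in_sharp)
  qed
qed (use coeff_in_max_ideal_if_lincomb_in_flat in blast)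

lemma exists_successor_coeffs:
  "\<exists>f d. \<forall>i<n. f i \<in> flat C \<and> (m i, f i + lincomb n (d i) m) \<in> C"
proof -
  have "\<forall>i\<in>{..<n}. \<exists>\<phi> c. \<phi> \<in> flat C \<and> (m i, \<phi> + lincomb n c m) \<in> C"
  proof
    fix i assume "i \<in> {..<n}"
    then obtain m' where "m' \<in> sharp C" "(m i, m') \<in> C" using sharp_successor m_in_sharp by blast
    then show "\<exists>\<phi> c. \<phi> \<in> flat C \<and> (m i, \<phi> + lincomb n c m) \<in> C" using sharp_decomp by blast
  qed
  then obtain f where "\<forall>i\<in>{..<n}. \<exists>c. f i \<in> flat C \<and> (m i, f i + lincomb n c m) \<in> C"
    by (rule bchoice[elim_format]) blast
  then obtain d where "\<forall>i\<in>{..<n}. f i \<in> flat C \<and> (m i, f i + lincomb n (d i) m) \<in> C"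
    by (rule bchoice[elim_format]) blast
  then show ?thesis by blast
qed

lemma exists_predecessor_coeffs:
  "\<exists>h e. \<forall>i<n. h i \<in> flat C \<and> (h i + lincomb n (e i) m, m i) \<in> C"
proof -
  have "\<forall>i\<in>{..<n}. \<exists>\<phi> c. \<phi> \<in> flat C \<and> (\<phi> + lincomb n c m, m i) \<in> C"
  proof
    fix i assume "i \<in> {..<n}"
    then obtain m' where "m' \<in> sharp C" "(m', m i) \<in> C" using sharp_predecessor m_in_sharp by blast
    then show "\<exists>\<phi> c. \<phi> \<in> flat C \<and> (\<phi> + lincomb n c m, m i) \<in> C" using sharp_decomp by blast
  qed
  then obtain h where "\<forall>i\<in>{..<n}. \<exists>c. h i \<in> flat C \<and> (h i + lincomb n c m, m i) \<in> C"
    by (rule bchoice[elim_format]) blast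
  then obtain e where "\<forall>i\<in>{..<n}. h i \<in> flat C \<and> (h i + lincomb n (e i) m, m i) \<in> C"
    by (rule bchoice[elim_format]) blast
  then show ?thesis by blast
qed

text \<open>Writing a predecessor of each \<open>m\<^sub>i\<close> as \<open>h\<^sub>i + \<Sum>\<^sub>k e\<^sub>i\<^sub>k m\<^sub>k\<close>, the element
  \<open>m\<^sub>i - \<Sum>\<^sub>k e\<^sub>i\<^sub>k (f\<^sub>k + \<Sum>\<^sub>j d\<^sub>k\<^sub>j m\<^sub>j)\<close> is a successor of \<open>h\<^sub>i \<in> C\<flat>\<close>, hence in \<open>C\<flat>\<close>;
  so \<open>E D \<equiv> 1\<close> modulo \<open>J\<close>.\<close>
lemma transition_matrix_invertible:
  assumes f: "\<And>i. i < n \<Longrightarrow> f i \<in> flat C"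
    and succ: "\<And>i. i < n \<Longrightarrow> (m i, f i + lincomb n (d i) m) \<in> C"
  obtains d' where "inverts_on n d d'" "inverts_on n d' d"
proof -
  obtain h e where he: "\<forall>i<n. h i \<in> flat C \<and> (h i + lincomb n (e i) m, m i) \<in> C"
    using exists_predecessor_coeffs by blast
  have "basis_vec i j - (\<Sum>k<n. e i k * d k j) \<in> max_ideal" if i: "i < n" and j: "j < n" for i j
  proof -
    define y where "y = lincomb n (e i) (\<lambda>k. f k + lincomb n (d k) m)"
    have "(lincomb n (e i) m, y) \<in> C"
      unfolding y_def using succ by (rule linear_relation_lincomb[OF linear_relation_C])
    moreover have "(h i + lincomb n (e i) m, m i) \<in> C" using he i by blast
    ultimately have "(h i + lincomb n (e i) m - lincomb n (e i) m, m i - y) \<in> C"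
      by (intro linear_relation_diff[OF linear_relation_C])
    then have "(h i, m i - y) \<in> C" by simp
    moreover have "m i - y \<in> sharp C"
      unfolding y_def using f flat_subset_sharp
      by (intro subspace_diff[OF subspace_sharp] m_in_sharp i subspace_lincomb[OF subspace_sharp]
          subspace_add[OF subspace_sharp] lincomb_in_sharp) auto
    ultimately have "m i - y \<in> flat C" using flat_successor he i by blast
    moreover have "lincomb n (e i) f \<in> flat C" using f by (rule subspace_lincomb[OF subspace_flat])
    ultimately have "(m i - y) + lincomb n (e i) f \<in> flat C" by (rule subspace_add[OF subspace_flat])
    moreover have "y = lincomb n (e i) f + lincomb n (\<lambda>j. \<Sum>k<n. e i k * d k j) m"
      unfolding y_def lincomb_add_right lincomb_lincomb ..
    then have "lincomb n (\<lambda>j. basis_vec i j - (\<Sum>k<n. e i k * d k j)) m = (m i - y) + lincomb n (e i) f"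
      unfolding lincomb_diff_left lincomb_basis_vec[OF i] by simp
    ultimately have "lincomb n (\<lambda>j. basis_vec i j - (\<Sum>k<n. e i k * d k j)) m \<in> flat C" by simp
    then show ?thesis unfolding lincomb_in_flat_iff using j by blast
  qed
  then obtain d' where "inverts_on n d d'" "inverts_on n d' d"
    by (rule exists_inverse_if_left_inverse_mod_max_ideal[OF local_ring])
  then show thesis by (rule that)
qed

lemma exists_stable_lift:
  obtains v d d' where "inverts_on n d d'" "inverts_on n d' d"
    and "\<And>i. i < n \<Longrightarrow> v i - m i \<in> flat C"
    and "\<And>i. i < n \<Longrightarrow> (v i, lincomb n (d i) v) \<in> C"
proof -
  obtain f d where "\<forall>i<n. f i \<in> flat C \<and> (m i, f i + lincomb n (d i) m) \<in> C"
    using exists_successor_coeffs by blast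
  then have f: "\<And>i. i < n \<Longrightarrow> f i \<in> flat C"
    and succ: "\<And>i. i < n \<Longrightarrow> (m i, f i + lincomb n (d i) m) \<in> C" by auto
  obtain d' where inv: "inverts_on n d d'" "inverts_on n d' d"
    by (rule transition_matrix_invertible[OF f succ])
  obtain g where g: "\<forall>i<n. g i \<in> flat C \<and> (g i, lincomb n (d i) g - f i) \<in> C"
    using exists_flat_correction[OF inv, of f] f by blast
  show thesis
  proof (rule that[OF inv, of "\<lambda>i. m i + g i"])
    show "m i + g i - m i \<in> flat C" if "i < n" for i using g that by simp
    show "(m i + g i, lincomb n (d i) (\<lambda>i. m i + g i)) \<in> C" if i: "i < n" for i
    proof -
      have "(g i, lincomb n (d i) g - f i) \<in> C" using g i by blast
      from linear_relation_add[OF linear_relation_C succ[OF i] this]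
      show ?thesis by (simp add: lincomb_add_right)
    qed
  qed
qed

lemma lincomb_lift_diff_in_flat:
  assumes "\<And>i. i < n \<Longrightarrow> v i - m i \<in> flat C"
  shows "lincomb n x v - lincomb n x m \<in> flat C"
  unfolding lincomb_diff_right[symmetric] using assms by (rule subspace_lincomb[OF subspace_flat])

lemma reduction_of_stable_lift:
  assumes inv: "inverts_on n d d'" "inverts_on n d' d"
    and lift: "\<And>i. i < n \<Longrightarrow> v i - m i \<in> flat C"
    and stable: "\<And>i. i < n \<Longrightarrow> (v i, lincomb n (d i) v) \<in> C"
  shows "reduction s C (coord_space n) (right_mult n d) (\<lambda>x. lincomb n x v)"
proof -
  have v_sharp: "v i \<in> sharp C" if "i < n" for i
    using subspace_add[OF subspace_sharp, of "v i - m i" "m i"] lift[OF that] m_in_sharp[OF that]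
      flat_subset_sharp by auto
  have "sharp C = set_plus (flat C) ((\<lambda>x. lincomb n x v) ` coord_space n)"
  proof
    show "sharp C \<subseteq> set_plus (flat C) ((\<lambda>x. lincomb n x v) ` coord_space n)"
    proof
      fix z assume "z \<in> sharp C"
      then obtain \<phi> c where \<phi>: "\<phi> \<in> flat C" "z = \<phi> + lincomb n c m" using sharp_decomp by blast
      define x where "x i = (if i < n then c i else 0)" for i
      have x: "x \<in> coord_space n" "lincomb n x m = lincomb n c m"
        unfolding x_def coord_space_def by (auto intro: lincomb_cong)
      have "z = (\<phi> - (lincomb n x v - lincomb n x m)) + lincomb n x v"
        using \<phi>(2) x(2) by simp
      moreover have "\<phi> - (lincomb n x v - lincomb n x m) \<in> flat C"
        using \<phi>(1) lincomb_lift_diff_in_flat[OF lift] by (rule subspace_diff[OF subspace_flat])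
      ultimately show "z \<in> set_plus (flat C) ((\<lambda>x. lincomb n x v) ` coord_space n)"
        unfolding set_plus_def using x(1) by blast
    qed
    show "set_plus (flat C) ((\<lambda>x. lincomb n x v) ` coord_space n) \<subseteq> sharp C"
      using flat_subset_sharp v_sharp
      by (intro set_plus_subset_subspace[OF subspace_sharp]) (auto intro: subspace_lincomb[OF subspace_sharp])
  qed
  moreover have "(lincomb n x v, lincomb n (right_mult n d x) v) \<in> C" for x
    unfolding lincomb_right_mult using stable by (rule linear_relation_lincomb[OF linear_relation_C])
  ultimately show ?thesis
    unfolding reduction_def rel_app_def
    using RT_module_right_mult[OF inv] lin_on_lincomb by blast
qed

lemma meets_in_radical_of_lift:
  assumes lift: "\<And>i. i < n \<Longrightarrow> v i - m i \<in> flat C"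
  shows "meets_in_radical C (coord_space n) (\<lambda>x. lincomb n x v)"
proof -
  have "lincomb n x v \<in> flat C \<longleftrightarrow> lincomb n x m \<in> flat C" for x
  proof
    assume "lincomb n x v \<in> flat C"
    from subspace_diff[OF subspace_flat this lincomb_lift_diff_in_flat[OF lift, of x]]
    show "lincomb n x m \<in> flat C" by simp
  next
    assume "lincomb n x m \<in> flat C"
    from subspace_add[OF subspace_flat lincomb_lift_diff_in_flat[OF lift, of x] this]
    show "lincomb n x v \<in> flat C" by simp
  qed
  then show ?thesis
    unfolding meets_in_radical_def rad_coord_space[OF local_ring] lincomb_in_flat_iff by blast
qed

end

theorem theorem4p13:
  fixes s :: "'r::comm_ring_1 \<Rightarrow> 'm::ab_group_add \<Rightarrow> 'm"
    and C :: "('m \<times> 'm) set"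
  assumes "local_ring TYPE('r)"
    and "is_module s"
    and "linear_relation s C"
    and "JM s \<subseteq> set_plus (sprime (rel_inv C)) (sprime C)"
    and "fin_dim_quot s (sharp C) (flat C)"
  shows "\<exists>X T \<rho>. reduction s C X T \<rho> \<and> free_mod X \<and> meets_in_radical C X \<rho>"
proof -
  interpret local_linrel s C
    using assms(1-4) unfolding is_module_def by unfold_locales auto
  let ?generates = "\<lambda>S. finite S \<and> S \<subseteq> sharp C \<and> sharp C \<subseteq> set_plus (flat C) (span S)"
  obtain S\<^sub>0 where "?generates S\<^sub>0"
    using assms(5) unfolding fin_dim_quot_def rspan_eq_span by blast
  then obtain S where S: "?generates S" and S_min: "\<And>S'. ?generates S' \<Longrightarrow> card S \<le> card S'"
    using ex_has_least_nat[of ?generates S\<^sub>0 card] by blast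
  obtain m where "bij_betw m {..<card S} S"
    using ex_bij_betw_nat_finite[of S] S by (auto simp: atLeast0LessThan)
  then interpret min_generators s C S m "card S"
    using S S_min by unfold_locales auto
  obtain v d d' where inv: "inverts_on (card S) d d'" "inverts_on (card S) d' d"
    and lift: "\<And>i. i < card S \<Longrightarrow> v i - m i \<in> flat C"
    and stable: "\<And>i. i < card S \<Longrightarrow> (v i, lincomb (card S) (d i) v) \<in> C"
    by (rule exists_stable_lift) blast
  show ?thesis
    using reduction_of_stable_lift[OF inv lift stable] meets_in_radical_of_lift[OF lift]
      free_mod_coord_space by blast
qed

end
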